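(* Let $r\geq 1$ and let $G$ be the complete $r$-partite graph with (nonempty) stable parts $V_1,\dots,V_r$, where $|V_i|\geq|V_{i+1}|$ for all $i\in\{1,\dots,r-1\}$. Define $s_r=|V_r|$ and, for $i=r-1,r-2,\dots,1$, $s_i=\max\{1+s_{i+1},|V_i|\}$. Then \[\eta(G)=\max\Bigl\{\Bigl\lceil \tfrac{s_i}{|V_i|}\Bigr\rceil : i\in\{1,\dots,r\}\Bigr\}.\] Moreover, $\eta(G)\leq r$.
   Context: All graphs are finite, simple and undirected. The complete $r$-partite graph with parts $V_1,\dots,V_r$ has vertex set $V_1\cup\cdots\cup V_r$ (disjoint), each $V_i$ stable, and every two vertices in different parts adjacent. For a vertex $v$, $N(v)$ is its set of neighbours. For a positive integer $k$, $[k]=\{1,\dots,k\}$. For a labeling $f:V(G)\to[k]$ and $S\subseteq V(G)$, $f(S)=\sum_{u\in S}f(u)$. A labeling $f:V(G)\to[k]$ is an additive $k$-coloring if $f(N(u))\neq f(N(v))$ for every edge $(u,v)$ of $G$. The additive chromatic number $\eta(G)$ is the least $k$ for which $G$ has an additive $k$-coloring. *)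

theory Defs
  imports Complex_Main
begin

text \<open>A simple graph is given by a finite vertex set V and a symmetric irreflexive
  adjacency relation E (only its restriction to V matters).\<close>

definition nbhd :: "'a set \<Rightarrow> ('a \<Rightarrow> 'a \<Rightarrow> bool) \<Rightarrow> 'a \<Rightarrow> 'a set" where
  "nbhd V E v = {w \<in> V. E v w}"

definition additive_coloring ::
  "'a set \<Rightarrow> ('a \<Rightarrow> 'a \<Rightarrow> bool) \<Rightarrow> nat \<Rightarrow> ('a \<Rightarrow> nat) \<Rightarrow> bool" where
  "additive_coloring V E k f \<longleftrightarrow>
     (\<forall>v\<in>V. f v \<in> {1..k}) \<and>
     (\<forall>u\<in>V. \<forall>v\<in>V. E u v \<longrightarrow> sum f (nbhd V E u) \<noteq> sum f (nbhd V E v))"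

definition additive_chromatic_number :: "'a set \<Rightarrow> ('a \<Rightarrow> 'a \<Rightarrow> bool) \<Rightarrow> nat" where
  "additive_chromatic_number V E = (LEAST k. k \<ge> 1 \<and> (\<exists>f. additive_coloring V E k f))"

definition cmp_vertices :: "(nat \<Rightarrow> nat) \<Rightarrow> nat \<Rightarrow> (nat \<times> nat) set" where
  "cmp_vertices n r = {(i, j). i \<in> {1..r} \<and> j < n i}"

definition cmp_adj :: "nat \<times> nat \<Rightarrow> nat \<times> nat \<Rightarrow> bool" where
  "cmp_adj u v \<longleftrightarrow> fst u \<noteq> fst v"

text \<open>s_r = |V_r|, s_i = max (1 + s_(i+1)) |V_i|; computed via t k = s_(r-k).\<close>
primrec s_aux :: "(nat \<Rightarrow> nat) \<Rightarrow> nat \<Rightarrow> nat \<Rightarrow> nat" where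
  "s_aux n r 0 = n r"
| "s_aux n r (Suc k) = max (1 + s_aux n r k) (n (r - Suc k))"

definition s_seq :: "(nat \<Rightarrow> nat) \<Rightarrow> nat \<Rightarrow> nat \<Rightarrow> nat" where
  "s_seq n r i = s_aux n r (r - i)"

end

theory Submission imports Defs begin

text \<open>In a complete multipartite graph the neighbourhood of a vertex is everything outside
  its own part, so a labelling is an additive coloring exactly when the parts get pairwise
  distinct label sums. Unfolding the recursion, s_i is the maximum of |V_j| + (j - i) over
  j \<ge> i. With labels in [k], the sums of the parts V_i, ..., V_j are j - i + 1 distinct
  integers in the interval [|V_j|, k |V_i|], which forces s_i \<le> k |V_i|. Conversely, if
  s_i \<le> k |V_i| for all i, labelling each part V_i so that it sums to exactly s_i gives an
  additive coloring, because the s_i are strictly decreasing. Finally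
  s_i \<le> |V_i| + r - 1 \<le> r |V_i| gives the bound r.\<close>

lemma s_seq_last: "s_seq n r r = n r"
  by (simp add: s_seq_def)

lemma s_seq_step:
  assumes "i < r"
  shows "s_seq n r i = max (1 + s_seq n r (Suc i)) (n i)"
proof -
  have "r - i = Suc (r - Suc i)" and "r - Suc (r - Suc i) = i"
    using assms by simp_all
  then show ?thesis
    unfolding s_seq_def by simp
qed

lemma s_seq_ge_self: "i \<le> r \<Longrightarrow> n i \<le> s_seq n r i"
  by (cases "i = r") (simp_all add: s_seq_last s_seq_step)

lemma s_seq_decreasing: "a \<le> b \<Longrightarrow> b \<le> r \<Longrightarrow> s_seq n r b + (b - a) \<le> s_seq n r a"
proof (induction b rule: dec_induct)
  case (step m)
  then have "1 + s_seq n r (Suc m) \<le> s_seq n r m"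
    using s_seq_step[of m r n] by simp
  with step show ?case by simp
qed simp

lemma s_seq_attained: "i \<le> r \<Longrightarrow> \<exists>j\<in>{i..r}. s_seq n r i = n j + (j - i)"
proof (induction i rule: inc_induct)
  case base
  show ?case by (auto simp: s_seq_last)
next
  case (step m)
  show ?case
  proof (cases "1 + s_seq n r (Suc m) \<le> n m")
    case True
    with step.hyps show ?thesis
      by (intro bexI[of _ m]) (auto simp: s_seq_step)
  next
    case False
    obtain j where "j \<in> {Suc m..r}" "s_seq n r (Suc m) = n j + (j - Suc m)"
      using step.IH by blast
    with False step.hyps show ?thesis
      by (intro bexI[of _ j]) (auto simp: s_seq_step)
  qed
qed

lemma s_seq_inj_on: "inj_on (s_seq n r) {..r}"
proof (rule linorder_inj_onI)
  fix a b assume "a < b" "b \<in> {..r}"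
  then show "s_seq n r a \<noteq> s_seq n r b"
    using s_seq_decreasing[of a b r n] by simp
qed auto

lemma antitone_by_steps:
  fixes f :: "nat \<Rightarrow> 'a::order"
  assumes steps: "\<forall>i\<in>{a..<b}. f (i + 1) \<le> f i"
    and "a \<le> i" "i \<le> j" "j \<le> b"
  shows "f j \<le> f i"
  using assms(3,4)
proof (induction j rule: dec_induct)
  case (step m)
  with assms(2) steps have "f (Suc m) \<le> f m" by simp
  with step show ?case by simp
qed simp

lemma s_seq_le_r_mult:
  assumes pos: "\<forall>i\<in>{1..r}. n i \<ge> 1"
    and anti: "\<forall>i\<in>{1..<r}. n i \<ge> n (i + 1)"
    and i: "i \<in> {1..r}"
  shows "s_seq n r i \<le> r * n i"
proof -
  obtain j where j: "j \<in> {i..r}" "s_seq n r i = n j + (j - i)"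
    using s_seq_attained[of i r n] i by auto
  have "n j \<le> n i"
    using antitone_by_steps[OF anti, of i j] i j by auto
  moreover have "j - i \<le> r - 1"
    using i j by auto
  moreover have "r - 1 \<le> (r - 1) * n i"
    using i pos by simp
  moreover have "r * n i = n i + (r - 1) * n i"
    using i by (cases r) auto
  ultimately show ?thesis
    using j(2) by linarith
qed

lemma exists_labelling_with_sum:
  assumes "finite A" "card A \<le> t" "t \<le> k * card A"
  shows "\<exists>g. (\<forall>x\<in>A. g x \<in> {1..k}) \<and> sum g A = t"
  using assms
proof (induction A arbitrary: t rule: finite_induct)
  case (insert x A)
  \<comment> \<open>the largest admissible label that still leaves at least 1 for every element of A\<close>
  define c where "c = min k (t - card A)"
  have card: "card (insert x A) = Suc (card A)"
    using insert.hyps by simp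
  have "k \<noteq> 0"
    using insert.prems card by (cases k) auto
  then have c: "1 \<le> c" "c \<le> k" "c \<le> t"
    using insert.prems card by (auto simp: c_def)
  have "card A \<le> t - c" "t - c \<le> k * card A"
    using insert.prems card \<open>k \<noteq> 0\<close> by (auto simp: c_def min_def)
  then obtain g where g: "\<forall>y\<in>A. g y \<in> {1..k}" "sum g A = t - c"
    using insert.IH by blast
  have "sum (g(x := c)) A = sum g A"
    using insert.hyps by (intro sum.cong) auto
  with insert.hyps g c have "sum (g(x := c)) (insert x A) = t"
    by simp
  moreover have "\<forall>y\<in>insert x A. (g(x := c)) y \<in> {1..k}"
    using g c by auto
  ultimately show ?case by blast
qed simp

definition part :: "(nat \<Rightarrow> nat) \<Rightarrow> nat \<Rightarrow> (nat \<times> nat) set" where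
  "part n i = {i} \<times> {..<n i}"

lemma finite_cmp_vertices: "finite (cmp_vertices n r)"
proof -
  have "cmp_vertices n r = Sigma {1..r} (\<lambda>i. {..<n i})"
    by (auto simp: cmp_vertices_def)
  then show ?thesis by simp
qed

lemma part_subset_cmp_vertices: "i \<in> {1..r} \<Longrightarrow> part n i \<subseteq> cmp_vertices n r"
  by (auto simp: part_def cmp_vertices_def)

lemma sum_nbhd_cmp:
  fixes f :: "nat \<times> nat \<Rightarrow> nat"
  assumes "u \<in> cmp_vertices n r"
  shows "sum f (nbhd (cmp_vertices n r) cmp_adj u)
           = sum f (cmp_vertices n r) - sum f (part n (fst u))"
proof -
  have "nbhd (cmp_vertices n r) cmp_adj u = cmp_vertices n r - part n (fst u)"
    using assms by (auto simp: nbhd_def cmp_adj_def cmp_vertices_def part_def)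
  moreover have "part n (fst u) \<subseteq> cmp_vertices n r"
    using assms by (auto simp: part_def cmp_vertices_def)
  ultimately show ?thesis
    by (simp add: sum_diff_nat finite_subset[OF _ finite_cmp_vertices])
qed

lemma additive_coloring_cmp_iff:
  fixes f :: "nat \<times> nat \<Rightarrow> nat"
  assumes pos: "\<forall>i\<in>{1..r}. n i \<ge> 1"
  shows "additive_coloring (cmp_vertices n r) cmp_adj k f \<longleftrightarrow>
           (\<forall>v\<in>cmp_vertices n r. f v \<in> {1..k}) \<and> inj_on (\<lambda>i. sum f (part n i)) {1..r}"
proof -
  let ?V = "cmp_vertices n r" and ?P = "\<lambda>i. sum f (part n i)"
  have nbhd_eq_iff: "sum f (nbhd ?V cmp_adj u) = sum f (nbhd ?V cmp_adj v) \<longleftrightarrow> ?P (fst u) = ?P (fst v)"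
    if "u \<in> ?V" "v \<in> ?V" for u v
  proof -
    have "?P i \<le> sum f ?V" if "i \<in> {1..r}" for i
      using that by (intro sum_mono2 finite_cmp_vertices part_subset_cmp_vertices) auto
    moreover have "fst u \<in> {1..r}" "fst v \<in> {1..r}"
      using that by (auto simp: cmp_vertices_def)
    ultimately have "?P (fst u) \<le> sum f ?V" "?P (fst v) \<le> sum f ?V"
      by simp_all
    then show ?thesis
      using sum_nbhd_cmp[OF that(1)] sum_nbhd_cmp[OF that(2)] by auto
  qed
  have "(\<forall>u\<in>?V. \<forall>v\<in>?V. cmp_adj u v \<longrightarrow> ?P (fst u) \<noteq> ?P (fst v)) \<longleftrightarrow> inj_on ?P {1..r}"
  proof
    assume distinct: "\<forall>u\<in>?V. \<forall>v\<in>?V. cmp_adj u v \<longrightarrow> ?P (fst u) \<noteq> ?P (fst v)"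
    show "inj_on ?P {1..r}"
    proof (rule inj_onI, rule ccontr)
      fix a b assume "a \<in> {1..r}" "b \<in> {1..r}" "?P a = ?P b" "a \<noteq> b"
      moreover from \<open>a \<in> {1..r}\<close> \<open>b \<in> {1..r}\<close> have "(a, 0) \<in> ?V" "(b, 0) \<in> ?V"
        using pos by (force simp: cmp_vertices_def)+
      ultimately show False
        using distinct by (fastforce simp: cmp_adj_def)
    qed
  next
    assume "inj_on ?P {1..r}"
    then show "\<forall>u\<in>?V. \<forall>v\<in>?V. cmp_adj u v \<longrightarrow> ?P (fst u) \<noteq> ?P (fst v)"
      by (auto simp: cmp_adj_def cmp_vertices_def dest: inj_onD)
  qed
  then show ?thesis
    unfolding additive_coloring_def using nbhd_eq_iff by blast
qed

lemma part_sum_bounds: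
  fixes f :: "nat \<times> nat \<Rightarrow> nat"
  assumes "\<forall>v\<in>cmp_vertices n r. f v \<in> {1..k}" "i \<in> {1..r}"
  shows "n i \<le> sum f (part n i)" "sum f (part n i) \<le> k * n i"
proof -
  have labels: "\<forall>v\<in>part n i. f v \<in> {1..k}"
    using assms part_subset_cmp_vertices[OF assms(2)] by blast
  have card: "card (part n i) = n i"
    by (simp add: part_def card_cartesian_product)
  show "n i \<le> sum f (part n i)"
    using sum_bounded_below[of "part n i" 1 f] labels card by auto
  show "sum f (part n i) \<le> k * n i"
    using sum_bounded_above[of "part n i" f k] labels card by (auto simp: mult.commute)
qed

lemma s_seq_le_of_additive_coloring:
  assumes pos: "\<forall>i\<in>{1..r}. n i \<ge> 1"
    and anti: "\<forall>i\<in>{1..<r}. n i \<ge> n (i + 1)"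
    and col: "additive_coloring (cmp_vertices n r) cmp_adj k f"
    and i: "i \<in> {1..r}"
  shows "s_seq n r i \<le> k * n i"
proof -
  define P where "P = (\<lambda>a. sum f (part n a))"
  have labels: "\<forall>v\<in>cmp_vertices n r. f v \<in> {1..k}" and inj: "inj_on P {1..r}"
    using col additive_coloring_cmp_iff[OF pos] by (auto simp: P_def)
  obtain j where j: "j \<in> {i..r}" "s_seq n r i = n j + (j - i)"
    using s_seq_attained[of i r n] i by auto
  have "P ` {i..j} \<subseteq> {n j..k * n i}"
  proof
    fix x assume "x \<in> P ` {i..j}"
    then obtain a where a: "a \<in> {i..j}" "x = P a" by blast
    with i j have "a \<in> {1..r}" by auto
    have "n j \<le> n a" "n a \<le> n i"
      using antitone_by_steps[OF anti] a i j by auto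
    with part_sum_bounds[OF labels \<open>a \<in> {1..r}\<close>] a show "x \<in> {n j..k * n i}"
      by (auto simp: P_def intro: order_trans mult_le_mono2)
  qed
  then have "card (P ` {i..j}) \<le> Suc (k * n i) - n j"
    using card_mono[of "{n j..k * n i}"] by simp
  moreover have "card (P ` {i..j}) = Suc j - i"
    using inj i j by (simp add: card_image inj_on_subset)
  ultimately show ?thesis
    using j by auto
qed

lemma additive_coloring_of_s_seq_le:
  assumes pos: "\<forall>i\<in>{1..r}. n i \<ge> 1"
    and le: "\<forall>i\<in>{1..r}. s_seq n r i \<le> k * n i"
  shows "\<exists>f. additive_coloring (cmp_vertices n r) cmp_adj k f"
proof -
  have "\<exists>g. (\<forall>v\<in>part n i. g v \<in> {1..k}) \<and> sum g (part n i) = s_seq n r i"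
    if "i \<in> {1..r}" for i
    using that le s_seq_ge_self[of i r n]
    by (intro exists_labelling_with_sum) (auto simp: part_def card_cartesian_product)
  then obtain G where G: "\<And>i. i \<in> {1..r} \<Longrightarrow>
      (\<forall>v\<in>part n i. G i v \<in> {1..k}) \<and> sum (G i) (part n i) = s_seq n r i"
    by metis
  define f where "f v = G (fst v) v" for v
  have part_sum: "sum f (part n i) = s_seq n r i" if "i \<in> {1..r}" for i
  proof -
    have "sum f (part n i) = sum (G i) (part n i)"
      by (rule sum.cong) (auto simp: f_def part_def)
    with G[OF that] show ?thesis by simp
  qed
  have "\<forall>v\<in>cmp_vertices n r. f v \<in> {1..k}"
    using G by (force simp: f_def part_def cmp_vertices_def)
  moreover have "inj_on (\<lambda>i. sum f (part n i)) {1..r}"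
    using inj_on_subset[OF s_seq_inj_on[of n r], of "{1..r}"] part_sum
      inj_on_cong[of "{1..r}" "\<lambda>i. sum f (part n i)" "s_seq n r"]
    by auto
  ultimately show ?thesis
    using additive_coloring_cmp_iff[OF pos] by blast
qed

lemma additive_chromatic_number_cmp:
  assumes "r \<ge> 1"
    and pos: "\<forall>i\<in>{1..r}. n i \<ge> 1"
    and anti: "\<forall>i\<in>{1..<r}. n i \<ge> n (i + 1)"
  shows "additive_chromatic_number (cmp_vertices n r) cmp_adj
           = (LEAST k. \<forall>i\<in>{1..r}. s_seq n r i \<le> k * n i)"
proof -
  have "k \<ge> 1 \<and> (\<exists>f. additive_coloring (cmp_vertices n r) cmp_adj k f)
          \<longleftrightarrow> (\<forall>i\<in>{1..r}. s_seq n r i \<le> k * n i)" (is "?colorable \<longleftrightarrow> ?le") for k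
  proof
    assume le: ?le
    have "1 \<le> s_seq n r 1" "s_seq n r 1 \<le> k * n 1"
      using le pos s_seq_ge_self[of 1 r n] \<open>r \<ge> 1\<close> by force+
    then have "k \<ge> 1"
      by (cases k) auto
    with additive_coloring_of_s_seq_le[OF pos le] show ?colorable
      by blast
  qed (use s_seq_le_of_additive_coloring[OF pos anti] in blast)
  then show ?thesis
    unfolding additive_chromatic_number_def by simp
qed

lemma ceiling_divide_le_iff: "0 < m \<Longrightarrow> \<lceil>real s / real m\<rceil> \<le> int k \<longleftrightarrow> s \<le> k * m"
  by (simp add: ceiling_le_iff pos_divide_le_eq flip: of_nat_mult)

lemma Least_le_mult_eq_Max_ceiling:
  fixes s m :: "'a \<Rightarrow> nat"
  assumes "finite I" "I \<noteq> {}" "\<forall>i\<in>I. 0 < m i"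
  shows "int (LEAST k. \<forall>i\<in>I. s i \<le> k * m i) = Max ((\<lambda>i. \<lceil>real (s i) / real (m i)\<rceil>) ` I)"
proof -
  define M where "M = Max ((\<lambda>i. \<lceil>real (s i) / real (m i)\<rceil>) ` I)"
  have M_le_iff: "M \<le> int k \<longleftrightarrow> (\<forall>i\<in>I. s i \<le> k * m i)" for k
    using assms by (simp add: M_def Max_le_iff ceiling_divide_le_iff)
  obtain i where "i \<in> I" using assms(2) by blast
  then have "\<lceil>real (s i) / real (m i)\<rceil> \<le> M"
    unfolding M_def using assms(1) by (intro Max_ge) auto
  moreover have "0 \<le> \<lceil>real (s i) / real (m i)\<rceil>"
    by (intro zero_le_ceiling[THEN iffD2]) (simp add: less_le_trans[of _ 0])
  ultimately have "0 \<le> M"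
    by linarith
  then have "(LEAST k. \<forall>i\<in>I. s i \<le> k * m i) = nat M"
    by (intro Least_equality) (simp_all flip: M_le_iff)
  with \<open>0 \<le> M\<close> show ?thesis
    by (simp add: M_def)
qed

theorem mainTheorem3:
  fixes n :: "nat \<Rightarrow> nat" and r :: nat
  assumes "r \<ge> 1"
    and "\<forall>i\<in>{1..r}. n i \<ge> 1"
    and "\<forall>i\<in>{1..<r}. n i \<ge> n (i + 1)"
  shows "int (additive_chromatic_number (cmp_vertices n r) cmp_adj)
           = Max ((\<lambda>i. \<lceil>real (s_seq n r i) / real (n i)\<rceil>) ` {1..r})
         \<and> additive_chromatic_number (cmp_vertices n r) cmp_adj \<le> r"
proof
  have "int (LEAST k. \<forall>i\<in>{1..r}. s_seq n r i \<le> k * n i)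
          = Max ((\<lambda>i. \<lceil>real (s_seq n r i) / real (n i)\<rceil>) ` {1..r})"
    using assms(1,2) by (intro Least_le_mult_eq_Max_ceiling) auto
  then show "int (additive_chromatic_number (cmp_vertices n r) cmp_adj)
               = Max ((\<lambda>i. \<lceil>real (s_seq n r i) / real (n i)\<rceil>) ` {1..r})"
    by (simp add: additive_chromatic_number_cmp[OF assms])
  show "additive_chromatic_number (cmp_vertices n r) cmp_adj \<le> r"
    unfolding additive_chromatic_number_cmp[OF assms]
    by (rule Least_le) (use s_seq_le_r_mult[OF assms(2,3)] in blast)
qed

end
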